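(* Let $D$ be a digraph. (1) If for every integer $k\geq3$ there is a colouring of the vertices of $D$ with countably many colours admitting no monochromatic copy of $\vec C_k$, then $\chi(D)\leq 2^{\omega}$. (2) The arc set of $D$ can be partitioned into two sets $E_0,E_1$ such that neither $(V(D),E_0)$ nor $(V(D),E_1)$ contains a directed cycle.
   Context: A digraph is a pair $D=(V,E)$ with $E\subseteq V^2$ such that $uv\in E$ implies $vu\notin E$. $\vec C_k$ is the directed cycle on $k$ vertices. The dichromatic number $\chi(D)$ is the minimal number of acyclic vertex sets (sets inducing no directed cycle) covering $V(D)$. *)

theory Defs
  imports Main
begin

definition is_digraph :: "'a set \<Rightarrow> ('a \<times> 'a) set \<Rightarrow> bool" where
  "is_digraph V E \<longleftrightarrow> E \<subseteq> V \<times> V \<and> (\<forall>u v. (u, v) \<in> E \<longrightarrow> (v, u) \<notin> E)"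

definition dicycle_copy :: "('a \<times> 'a) set \<Rightarrow> 'a set \<Rightarrow> nat \<Rightarrow> (nat \<Rightarrow> 'a) \<Rightarrow> bool" where
  "dicycle_copy E S k f \<longleftrightarrow> k \<ge> 1 \<and> inj_on f {..<k} \<and>
     (\<forall>i<k. f i \<in> S \<and> (f i, f (Suc i mod k)) \<in> E)"

definition acyclic_set :: "('a \<times> 'a) set \<Rightarrow> 'a set \<Rightarrow> bool" where
  "acyclic_set E S \<longleftrightarrow> \<not> (\<exists>k f. dicycle_copy E S k f)"

definition mono_dicycle :: "'a set \<Rightarrow> ('a \<times> 'a) set \<Rightarrow> ('a \<Rightarrow> 'c) \<Rightarrow> nat \<Rightarrow> bool" where
  "mono_dicycle V E c k \<longleftrightarrow> (\<exists>f. dicycle_copy E V k f \<and> (\<forall>i<k. c (f i) = c (f 0)))"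

end

theory Submission
  imports Defs "HOL-Library.Nat_Bijection"
begin

text \<open>Part (1): fix for each \<open>k \<ge> 3\<close> a colouring \<open>c\<^sub>k\<close> with no monochromatic \<open>k\<close>-cycle and give
  \<open>v\<close> the colour \<open>{(k, c\<^sub>k v) | k \<ge> 3}\<close>, a set of naturals (via a pairing function). A colour
  class is monochromatic for every \<open>c\<^sub>k\<close>, so it contains no cycle of length \<open>k \<ge> 3\<close>; shorter
  cycles are excluded in a digraph. Part (2): take the strict part of a well-order of the
  vertices and split the arcs into forward and backward ones; each half lies in a strict
  order or its converse and is therefore acyclic.\<close>

lemma dicycle_copy_trancl:
  assumes "dicycle_copy E S k f"
  shows "(f 0, f 0) \<in> E\<^sup>+"
proof -
  from assms have k: "k \<ge> 1" and arc: "\<And>i. i < k \<Longrightarrow> (f i, f (Suc i mod k)) \<in> E"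
    unfolding dicycle_copy_def by auto
  have "(f 0, f (i mod k)) \<in> E\<^sup>+" if "1 \<le> i" "i \<le> k" for i
    using that
  proof (induction i rule: dec_induct)
    case base
    then show ?case using arc[of 0] k by simp
  next
    case (step n)
    then have "(f 0, f n) \<in> E\<^sup>+" "(f n, f (Suc n mod k)) \<in> E"
      using arc[of n] by simp_all
    then show ?case by (rule trancl_into_trancl)
  qed
  from this[of k] k show ?thesis by simp
qed

lemma acyclic_imp_acyclic_set: "acyclic E \<Longrightarrow> acyclic_set E S"
  unfolding acyclic_set_def acyclic_def by (blast dest: dicycle_copy_trancl)

lemma dicycle_copy_length_ge_3:
  assumes "is_digraph V E" and "dicycle_copy E S k f"
  shows "k \<ge> 3"
proof (rule ccontr)
  assume "\<not> k \<ge> 3"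
  with assms(2) have "k = 1 \<or> k = 2" unfolding dicycle_copy_def by auto
  then show False
  proof
    assume "k = 1"
    with assms(2) have "(f 0, f 0) \<in> E" unfolding dicycle_copy_def by auto
    with assms(1) show False unfolding is_digraph_def by blast
  next
    assume "k = 2"
    with assms(2) have "\<And>i. i < 2 \<Longrightarrow> (f i, f (Suc i mod 2)) \<in> E"
      unfolding dicycle_copy_def by auto
    from this[of 0] this[of 1] assms(1) show False by (auto simp: is_digraph_def)
  qed
qed

lemma acyclic_set_if_colourings_constant:
  assumes "is_digraph V E" and "S \<subseteq> V"
    and no_mono: "\<And>k. k \<ge> 3 \<Longrightarrow> \<not> mono_dicycle V E (C k) k"
    and const_on_S: "\<And>k v w. k \<ge> 3 \<Longrightarrow> v \<in> S \<Longrightarrow> w \<in> S \<Longrightarrow> C k v = C k w"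
  shows "acyclic_set E S"
  unfolding acyclic_set_def
proof
  assume "\<exists>k f. dicycle_copy E S k f"
  then obtain k f where cyc: "dicycle_copy E S k f" by blast
  have k: "k \<ge> 3" using dicycle_copy_length_ge_3[OF assms(1) cyc] .
  have "dicycle_copy E V k f" and "\<forall>i<k. f i \<in> S"
    using cyc \<open>S \<subseteq> V\<close> unfolding dicycle_copy_def by auto
  moreover from this(2) k have "\<forall>i<k. C k (f i) = C k (f 0)"
    by (simp add: const_on_S)
  ultimately have "mono_dicycle V E (C k) k" unfolding mono_dicycle_def by blast
  with no_mono k show False by blast
qed

lemma acyclic_colouring_by_nat_sets:
  assumes "is_digraph V E" and "\<forall>k\<ge>3. \<exists>c :: 'a \<Rightarrow> nat. \<not> mono_dicycle V E c k"
  shows "\<exists>c :: 'a \<Rightarrow> nat set. \<forall>x. acyclic_set E {v \<in> V. c v = x}"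
proof -
  obtain C :: "nat \<Rightarrow> 'a \<Rightarrow> nat" where no_mono: "\<And>k. k \<ge> 3 \<Longrightarrow> \<not> mono_dicycle V E (C k) k"
    using assms(2) by metis
  define c where "c v = {prod_encode (k, C k v) | k. k \<ge> 3}" for v
  have same_colour: "C k v = C k w" if "c v = c w" "k \<ge> 3" for v w k
  proof -
    from that have "prod_encode (k, C k v) \<in> c w" unfolding c_def by blast
    then obtain k' where "prod_encode (k, C k v) = prod_encode (k', C k' w)"
      unfolding c_def by blast
    then show ?thesis by (auto simp: prod_encode_eq)
  qed
  have "acyclic_set E {v \<in> V. c v = x}" for x
    by (rule acyclic_set_if_colourings_constant[OF assms(1) _ no_mono])
       (auto intro: same_colour)
  then show ?thesis by blast
qed

lemma arcs_split_into_two_acyclic: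
  assumes "is_digraph V E"
  shows "\<exists>E0 E1. E0 \<union> E1 = E \<and> E0 \<inter> E1 = {} \<and> acyclic_set E0 V \<and> acyclic_set E1 V"
proof -
  obtain r :: "'a rel" where "well_order_on UNIV r" using well_order_on by blast
  then have lin: "linear_order_on UNIV r" by (simp add: well_order_on_def)
  define P where "P = r - Id"
  have "acyclic P" unfolding P_def using lin by (rule linear_order_on_acyclic)
  have total: "(u, v) \<in> P \<or> (v, u) \<in> P" if "u \<noteq> v" for u v
    using strict_linear_order_on_diff_Id[OF lin] that
    unfolding P_def strict_linear_order_on_def total_on_def by blast
  have loopfree: "u \<noteq> v" if "(u, v) \<in> E" for u v
    using assms that unfolding is_digraph_def by blast
  have "E - P \<subseteq> P\<inverse>"
  proof (rule subrelI)
    fix u v assume "(u, v) \<in> E - P"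
    then show "(u, v) \<in> P\<inverse>" using total[of u v] loopfree[of u v] by simp
  qed
  then have "acyclic (E - P)" using \<open>acyclic P\<close> by (meson acyclic_converse acyclic_subset)
  moreover have "acyclic (E \<inter> P)" using \<open>acyclic P\<close> by (auto intro: acyclic_subset)
  ultimately show ?thesis
    by (intro exI[of _ "E \<inter> P"] exI[of _ "E - P"]) (auto intro: acyclic_imp_acyclic_set)
qed

theorem mainTheorem19:
  fixes V :: "'a set" and E :: "('a \<times> 'a) set"
  assumes "is_digraph V E"
  shows "((\<forall>k\<ge>3. \<exists>c :: 'a \<Rightarrow> nat. \<not> mono_dicycle V E c k)
           \<longrightarrow> (\<exists>c :: 'a \<Rightarrow> nat set. \<forall>x. acyclic_set E {v \<in> V. c v = x}))
       \<and> (\<exists>E0 E1. E0 \<union> E1 = E \<and> E0 \<inter> E1 = {} \<and> acyclic_set E0 V \<and> acyclic_set E1 V)"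
  using acyclic_colouring_by_nat_sets[OF assms] arcs_split_into_two_acyclic[OF assms] by blast

end
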